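(* Let $(\mathbf k,\log)$ be an ordered field with surjective logarithm, $(\mathbf k((G)),l)$ a series field with prelogarithmic section, $\psi$ a morphism from $(\mathbf k((G)),l)$ to itself, and $H\ne\{1\}$ a subgroup of $G$ satisfying the growth axiom. Then for every $m\ge0$, $G^0_m$ satisfies the growth axiom, and for every $n\ge0$, $G^{n+1}_m$ is the anti-lexicographic product of $G^n_m$ and $\mathrm{Exp}\,\mathbf k(((G^n_m)^{>G^{n-1}_m}))$. Moreover $\mathrm{Exp}\,\mathbf k(((G^n_m)^{>1}))\subseteq G^{n+1}_m$.
   Context: Let $\mathbf k$ be an ordered field and $(G,\cdot,<)$ a totally ordered abelian group (written multiplicatively). $\mathbf k((G))$ denotes the field of generalized power series $\alpha=\sum_{g\in G}\alpha(g)\,g$ ($\alpha(g)\in\mathbf k$) with anti-well-ordered support, usual operations, canonical valuation $v(\alpha)=\max\operatorname{supp}\alpha$ and ordering $\alpha>0$ iff $\alpha(v(\alpha))>0$; $\mathbf k$, $G$ are identified with subsets of $\mathbf k((G))$. For $S\subseteq G$, $\mathbf k((S))=\{\alpha:\operatorname{supp}\alpha\subseteq S\}$. For a subgroup $H$ and $A\subseteq G$, $H^{>A}=\{h\in H:h>a\ \forall a\in A\}$, $H^{>1}=\{h\in H:h>1\}$. Every $\alpha>0$ is uniquely $\alpha=g\,a(1+\varepsilon)$ with $g=v(\alpha)$, $a\in\mathbf k^{>0}$, $\varepsilon\in\mathbf k((G^{<1}))$. A prelogarithmic section is an order-preserving group embedding $l:(G,\cdot)\to(\mathbf k((G^{>1})),+)$;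 the prelogarithm of $l$ is $L(g\,a(1+\varepsilon))=l(g)+\log a+\sum_{i\ge1}(-1)^{i-1}\varepsilon^i/i$. Exponential extension: $G^\#$ is the ordered abelian group of formal symbols $e(\alpha)$, $\alpha\in\mathbf k((G^{>1}))$, with $e(\alpha)e(\beta)=e(\alpha+\beta)$, $e(\alpha)<e(\beta)\iff\alpha<\beta$, and $e(l(g))$ identified with $g\in G$; $l^\#(e(\alpha))=\alpha$ is a prelogarithmic section of $\mathbf k((G^\#))$ extending $l$. Iterating: $G^{\#n}$, $l^{\#n}$, $L^{\#n}$. The EL-series field is $\mathbf k((G))^{EL}=\bigcup_n\mathbf k((G^{\#n}))$ with $\mathrm{Log}=\bigcup_nL^{\#n}$ and $\mathrm{Exp}=\mathrm{Log}^{-1}$. An order-preserving group embedding $\psi:G\to G$, extended to $\mathbf k((G))$ by $\psi(\sum a_gg)=\sum a_g\psi(g)$, is a morphism of $(\mathbf k((G)),l)$ to itself if $\psi\circ l=l\circ\psi$ on $G$; $\psi^{(m)}$ is its $m$-fold composite. A subgroup $H\ne\{1\}$ of $G$ satisfies the growth axiom if $\mathrm{Log}(h)<|f|$ for all $h\in H$ and all nonzero $f\in\mathbf k((H^{>1}))$. "Anti-lexicographic product" of subgroups $A,B$: the group is $A\cdot B$, the product is direct and $A$ is convex in it. LE construction: $G^{-1}_m=\{1\}$, $G^0_m=\psi^{(m)}(H)$, $G^{n+1}_m=G^n_m\cdot\mathrm{Exp}\,\mathbf k(((G^n_m)^{>G^{n-1}_m}))\subseteq G^{\#(n+1)}$.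 *)

theory Defs
  imports Main
begin

text \<open>The value group is written additively: the ambient type
 'u is a linearly ordered abelian group (written with +, 0, <), so the
 paper's multiplicative 1, g*h, g^{-1}, G^{>1} become 0, g+h, -g, positive part.
 A generalized power series over 'u with coefficients in 'k is a function
 'u => 'k; k((S)) is the set of such functions with anti-well-ordered
 support contained in S.\<close>

definition supp :: "('u \<Rightarrow> 'k::zero) \<Rightarrow> 'u set" where
  "supp a = {g. a g \<noteq> 0}"

definition anti_wo :: "'u::linorder set \<Rightarrow> bool" where
  "anti_wo A \<longleftrightarrow> (\<forall>B. B \<subseteq> A \<longrightarrow> B \<noteq> {} \<longrightarrow> (\<exists>b\<in>B. \<forall>c\<in>B. c \<le> b))"

definition hahn :: "'u::linorder set \<Rightarrow> ('u \<Rightarrow> 'k::zero) set" where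
  "hahn S = {a. supp a \<subseteq> S \<and> anti_wo (supp a)}"

definition hzero :: "'u \<Rightarrow> 'k::zero" where
  "hzero = (\<lambda>_. 0)"

definition hadd :: "('u \<Rightarrow> 'k::ab_group_add) \<Rightarrow> ('u \<Rightarrow> 'k) \<Rightarrow> ('u \<Rightarrow> 'k)" where
  "hadd a b = (\<lambda>g. a g + b g)"

definition hneg :: "('u \<Rightarrow> 'k::ab_group_add) \<Rightarrow> ('u \<Rightarrow> 'k)" where
  "hneg a = (\<lambda>g. - a g)"

definition hval :: "('u::linorder \<Rightarrow> 'k::zero) \<Rightarrow> 'u" where
  "hval a = (GREATEST g. a g \<noteq> 0)"

definition hpos :: "('u::linorder \<Rightarrow> 'k::linordered_field) \<Rightarrow> bool" where
  "hpos a \<longleftrightarrow> a \<noteq> hzero \<and> 0 < a (hval a)"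

definition hless :: "('u::linorder \<Rightarrow> 'k::linordered_field) \<Rightarrow> ('u \<Rightarrow> 'k) \<Rightarrow> bool" where
  "hless a b \<longleftrightarrow> hpos (hadd b (hneg a))"

definition habs :: "('u::linorder \<Rightarrow> 'k::linordered_field) \<Rightarrow> ('u \<Rightarrow> 'k)" where
  "habs a = (if hpos a then a else hneg a)"

definition surj_log :: "('k::linordered_field \<Rightarrow> 'k) \<Rightarrow> bool" where
  "surj_log lg \<longleftrightarrow>
     (\<forall>a b. 0 < a \<longrightarrow> 0 < b \<longrightarrow> lg (a * b) = lg a + lg b)
   \<and> (\<forall>a b. 0 < a \<longrightarrow> a < b \<longrightarrow> lg a < lg b)
   \<and> (\<forall>y. \<exists>x. 0 < x \<and> lg x = y)"

definition addsubgroup :: "'u::ab_group_add set \<Rightarrow> bool" where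
  "addsubgroup A \<longleftrightarrow> 0 \<in> A \<and> (\<forall>x\<in>A. \<forall>y\<in>A. x + y \<in> A) \<and> (\<forall>x\<in>A. - x \<in> A)"

definition above :: "'u::linorder set \<Rightarrow> 'u set \<Rightarrow> 'u set" where
  "above H A = {h \<in> H. \<forall>a\<in>A. a < h}"

definition pos :: "'u::linordered_ab_group_add set \<Rightarrow> 'u set" where
  "pos H = above H {0}"

definition gprod :: "'u::ab_group_add set \<Rightarrow> 'u set \<Rightarrow> 'u set" where
  "gprod A B = {a + b |a b. a \<in> A \<and> b \<in> B}"

definition prelog_section ::
  "'u::linordered_ab_group_add set \<Rightarrow> ('u \<Rightarrow> 'u \<Rightarrow> 'k::linordered_field) \<Rightarrow> bool" where
  "prelog_section G l \<longleftrightarrow>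
     (\<forall>g\<in>G. l g \<in> hahn (pos G))
   \<and> (\<forall>g\<in>G. \<forall>h\<in>G. l (g + h) = hadd (l g) (l h))
   \<and> (\<forall>g\<in>G. \<forall>h\<in>G. g < h \<longrightarrow> hless (l g) (l h))"

text \<open>A realization of the iterated exponential extensions inside the ambient
 group 'u: Gam n is G^{#n} (with G^{#n} \<subseteq> G^{#(n+1)} via the identification
 e(l^{#n}(g)) = g), and lw is the union of the l^{#n}, i.e. lw restricted to
 G^{#(n+1)} is l^{#(n+1)} = e^{-1}, an order-preserving group isomorphism onto
 k((G^{#n, >1})).\<close>
definition EL_tower ::
  "'u::linordered_ab_group_add set \<Rightarrow> ('u \<Rightarrow> 'u \<Rightarrow> 'k::linordered_field)
    \<Rightarrow> (nat \<Rightarrow> 'u set) \<Rightarrow> ('u \<Rightarrow> 'u \<Rightarrow> 'k) \<Rightarrow> bool" where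
  "EL_tower G l Gam lw \<longleftrightarrow>
     Gam 0 = G
   \<and> (\<forall>n. Gam n \<subseteq> Gam (Suc n))
   \<and> (\<forall>n. addsubgroup (Gam n))
   \<and> (\<forall>g\<in>G. lw g = l g)
   \<and> (\<forall>n. bij_betw lw (Gam (Suc n)) (hahn (pos (Gam n))))
   \<and> (\<forall>n. \<forall>x\<in>Gam (Suc n). \<forall>y\<in>Gam (Suc n). lw (x + y) = hadd (lw x) (lw y))
   \<and> (\<forall>n. \<forall>x\<in>Gam (Suc n). \<forall>y\<in>Gam (Suc n). x < y \<longrightarrow> hless (lw x) (lw y))"

text \<open>extension of psi to series: psi(sum a_g g) = sum a_g psi(g)\<close>
definition hmap :: "('u \<Rightarrow> 'u) \<Rightarrow> 'u set \<Rightarrow> ('u \<Rightarrow> 'k::zero) \<Rightarrow> ('u \<Rightarrow> 'k)" where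
  "hmap psi G a = (\<lambda>y. if y \<in> psi ` G then a (inv_into G psi y) else 0)"

definition morphism ::
  "'u::linordered_ab_group_add set \<Rightarrow> ('u \<Rightarrow> 'u \<Rightarrow> 'k::linordered_field) \<Rightarrow> ('u \<Rightarrow> 'u) \<Rightarrow> bool" where
  "morphism G l psi \<longleftrightarrow>
     psi ` G \<subseteq> G
   \<and> (\<forall>g\<in>G. \<forall>h\<in>G. psi (g + h) = psi g + psi h)
   \<and> (\<forall>g\<in>G. \<forall>h\<in>G. g < h \<longrightarrow> psi g < psi h)
   \<and> (\<forall>g\<in>G. l (psi g) = hmap psi G (l g))"

text \<open>Growth axiom for a subgroup H \<noteq> {1} of G. For h \<in> H \<subseteq> G (a monomial with
 coefficient 1), Log(h) = l(h) = lw h.\<close>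
definition growth_axiom ::
  "('u::linordered_ab_group_add \<Rightarrow> 'u \<Rightarrow> 'k::linordered_field) \<Rightarrow> 'u set \<Rightarrow> 'u set \<Rightarrow> bool" where
  "growth_axiom lw G H \<longleftrightarrow>
     H \<subseteq> G \<and> addsubgroup H \<and> H \<noteq> {0}
   \<and> (\<forall>h\<in>H. \<forall>f\<in>hahn (pos H). f \<noteq> hzero \<longrightarrow> hless (lw h) (habs f))"

text \<open>Exp k((S)) for S a set of positive elements of the EL value group:
 the elements x of the union of the G^{#n} with Log(x) = lw x \<in> k((S)).\<close>
definition Exp_set ::
  "(nat \<Rightarrow> 'u::linorder set) \<Rightarrow> ('u \<Rightarrow> 'u \<Rightarrow> 'k::zero) \<Rightarrow> 'u set \<Rightarrow> 'u set" where
  "Exp_set Gam lw S = {x \<in> (\<Union>n. Gam n). lw x \<in> hahn S}"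

definition antilex_prod :: "'u::linordered_ab_group_add set \<Rightarrow> 'u set \<Rightarrow> 'u set \<Rightarrow> bool" where
  "antilex_prod A B C \<longleftrightarrow>
     addsubgroup A \<and> addsubgroup B \<and> C = gprod A B \<and> A \<inter> B = {0}
   \<and> (\<forall>x\<in>A. \<forall>y\<in>A. \<forall>z\<in>C. x \<le> z \<and> z \<le> y \<longrightarrow> z \<in> A)"

text \<open>LE construction, shifted by one: LEg ... m (Suc n) is G^n_m, and
 LEg ... m 0 is G^{-1}_m = {1}.\<close>
fun LEg :: "(nat \<Rightarrow> 'u::linordered_ab_group_add set) \<Rightarrow> ('u \<Rightarrow> 'u \<Rightarrow> 'k::zero)
    \<Rightarrow> ('u \<Rightarrow> 'u) \<Rightarrow> 'u set \<Rightarrow> nat \<Rightarrow> nat \<Rightarrow> 'u set" where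
  "LEg Gam lw psi H m 0 = {0}"
| "LEg Gam lw psi H m (Suc 0) = (psi ^^ m) ` H"
| "LEg Gam lw psi H m (Suc (Suc n)) =
     gprod (LEg Gam lw psi H m (Suc n))
           (Exp_set Gam lw (above (LEg Gam lw psi H m (Suc n)) (LEg Gam lw psi H m n)))"

end

theory Submission
  imports Defs
begin

text \<open>
  The first one, that psi^m(H) satisfies the growth axiom,
  holds because a morphism psi commutes with the prelogarithm and preserves the ordering of
  series, so it transports the growth axiom from any subgroup K to psi(K); induction on m
  finishes.  The central invariant, proved by
  induction along the tower, is that for g in G^n the support of Log g lies strictly below
  the gap S_n = (G^n)^{>G^{n-1}}, and that S_n is nonempty; for n = 0 this is a reformulation
  of the growth axiom.  It implies that every positive e in Exp k((S_n)) dominates G^n, since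
  the leading monomial of Log e cannot be cancelled by Log g.  Domination yields directness
  and convexity, hence the anti-lexicographic product, and splitting the support of Log x
  at S_n gives Exp k(((G^n)^{>1})) \<subseteq> G^{n+1} by a second induction.
\<close>

section \<open>Series: supports, the canonical valuation and the ordering\<close>

lemma anti_wo_subset: "anti_wo B \<Longrightarrow> A \<subseteq> B \<Longrightarrow> anti_wo A"
  unfolding anti_wo_def by blast

text \<open>The union of two anti-well-ordered sets is anti-well-ordered: this is what makes
  k((S)) closed under addition.\<close>
lemma anti_wo_Un:
  fixes A B :: "'u::linorder set"
  assumes "anti_wo A" "anti_wo B" shows "anti_wo (A \<union> B)"
  unfolding anti_wo_def
proof (intro allI impI)
  fix C assume C: "C \<subseteq> A \<union> B" "C \<noteq> {}"
  show "\<exists>b\<in>C. \<forall>c\<in>C. c \<le> b"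
  proof (cases "C \<inter> A = {} \<or> C \<inter> B = {}")
    case True
    then have "C \<subseteq> A \<or> C \<subseteq> B" using C(1) by blast
    then show ?thesis using assms C(2) unfolding anti_wo_def by blast
  next
    case False
    then obtain a b where a: "a \<in> C \<inter> A" "\<forall>c\<in>C \<inter> A. c \<le> a"
      and b: "b \<in> C \<inter> B" "\<forall>c\<in>C \<inter> B. c \<le> b"
      using assms unfolding anti_wo_def by (metis inf_le2)
    have "max a b \<in> C" using a b by (simp add: max_def)
    moreover have "\<forall>c\<in>C. c \<le> max a b" using a b C(1) by (auto simp: le_max_iff_disj)
    ultimately show ?thesis by blast
  qed
qed

lemma supp_hadd: "supp (hadd a b) \<subseteq> supp a \<union> supp b"
  by (auto simp: supp_def hadd_def)

lemma supp_hneg: "supp (hneg a) = supp a"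
  by (auto simp: supp_def hneg_def)

lemma hahn_hadd: "a \<in> hahn S \<Longrightarrow> b \<in> hahn S \<Longrightarrow> hadd a b \<in> hahn S"
  unfolding hahn_def using supp_hadd[of a b] anti_wo_Un anti_wo_subset by blast

lemma hahn_hneg: "a \<in> hahn S \<Longrightarrow> hneg a \<in> hahn S"
  unfolding hahn_def by (simp add: supp_hneg)

lemma hahn_zero: "hzero \<in> hahn S"
  unfolding hahn_def anti_wo_def supp_def hzero_def by simp

lemma hahn_mono: "S \<subseteq> T \<Longrightarrow> hahn S \<subseteq> hahn T"
  unfolding hahn_def by blast

text \<open>Restricting a series to S and to its complement splits it into a sum of two
  series; this is how an element of Exp k((T)) is decomposed along a gap.\<close>
lemma hahn_split:
  fixes f :: "'u::linorder \<Rightarrow> 'k::ab_group_add"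
  assumes "f \<in> hahn T"
  shows "f = hadd (\<lambda>w. if w \<in> S then f w else 0) (\<lambda>w. if w \<in> S then 0 else f w)"
    and "(\<lambda>w. if w \<in> S then f w else 0) \<in> hahn (T \<inter> S)"
    and "(\<lambda>w. if w \<in> S then 0 else f w) \<in> hahn (T - S)"
  using assms unfolding hahn_def
  by (auto simp: hadd_def supp_def elim!: anti_wo_subset)

definition hmonom :: "'u \<Rightarrow> 'k::zero \<Rightarrow> 'u \<Rightarrow> 'k" where
  "hmonom s c = (\<lambda>y. if y = s then c else 0)"

lemma hmonom_hahn: "s \<in> S \<Longrightarrow> hmonom s c \<in> hahn S"
  unfolding hahn_def anti_wo_def supp_def hmonom_def by (auto split: if_splits)

lemma hval_eq: "c v \<noteq> 0 \<Longrightarrow> (\<forall>w. v < w \<longrightarrow> c w = 0) \<Longrightarrow> hval c = (v::'u::linorder)"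
  unfolding hval_def by (rule Greatest_equality) (auto simp: not_le[symmetric])

lemma hpos_iff_leading:
  fixes c :: "'u::linorder \<Rightarrow> 'k::linordered_field"
  assumes "c v \<noteq> 0" "\<forall>w. v < w \<longrightarrow> c w = 0" shows "hpos c \<longleftrightarrow> 0 < c v"
proof -
  have "hval c = v" using hval_eq assms by blast
  moreover have "c \<noteq> hzero" using assms(1) by (auto simp: hzero_def)
  ultimately show ?thesis unfolding hpos_def by simp
qed

lemma hpos_hmonom: "0 < c \<Longrightarrow> hpos (hmonom s (c::'k::linordered_field))"
  using hpos_iff_leading[of "hmonom s c" s] by (simp add: hmonom_def)

lemma hless_by_leading:
  fixes a b :: "'u::linorder \<Rightarrow> 'k::linordered_field"
  assumes "a v < b v" "\<And>w. v < w \<Longrightarrow> a w = 0" "\<And>w. v < w \<Longrightarrow> b w = 0"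
  shows "hless a b"
proof -
  have "hadd b (hneg a) v \<noteq> 0" "\<forall>w. v < w \<longrightarrow> hadd b (hneg a) w = 0"
    using assms by (auto simp: hadd_def hneg_def)
  from hpos_iff_leading[OF this] show ?thesis
    using assms(1) unfolding hless_def by (simp add: hadd_def hneg_def)
qed

lemma hval_max:
  fixes a :: "'u::linorder \<Rightarrow> 'k::zero"
  assumes "anti_wo (supp a)" "a \<noteq> hzero"
  shows "hval a \<in> supp a" "\<forall>w\<in>supp a. w \<le> hval a"
proof -
  have "supp a \<noteq> {}" using assms(2) by (auto simp: supp_def hzero_def)
  then obtain b where b: "b \<in> supp a" "\<forall>c\<in>supp a. c \<le> b"
    using assms(1) unfolding anti_wo_def by blast
  have "hval a = b"
    using b by (intro hval_eq) (auto simp: supp_def not_le[symmetric])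
  then show "hval a \<in> supp a" "\<forall>w\<in>supp a. w \<le> hval a" using b by auto
qed

lemma hval_hneg: "hval (hneg a) = hval (a :: 'u::linorder \<Rightarrow> 'k::ab_group_add)"
  unfolding hval_def hneg_def by simp

lemma hpos_not_both: "hpos d \<Longrightarrow> \<not> hpos (hneg d)"
  unfolding hpos_def hval_hneg by (auto simp: hneg_def)

lemma hpos_or_hpos_hneg:
  fixes a :: "'u::linorder \<Rightarrow> 'k::linordered_field"
  assumes "anti_wo (supp a)" "a \<noteq> hzero" shows "hpos a \<or> hpos (hneg a)"
proof -
  have "a (hval a) \<noteq> 0" using hval_max[OF assms] by (simp add: supp_def)
  moreover have "hneg a \<noteq> hzero" using assms(2) by (auto simp: hneg_def hzero_def fun_eq_iff)
  ultimately show ?thesis using assms(2) unfolding hpos_def hval_hneg by (auto simp: hneg_def)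
qed

lemma hless_asym: "hless a b \<Longrightarrow> \<not> hless b a"
proof -
  have "hadd a (hneg b) = hneg (hadd b (hneg a))" by (rule ext) (simp add: hadd_def hneg_def)
  then show "hless a b \<Longrightarrow> \<not> hless b a" unfolding hless_def using hpos_not_both by metis
qed

lemma hless_irrefl: "\<not> hless a a"
proof -
  have "hadd a (hneg a) = hzero" by (rule ext) (simp add: hadd_def hneg_def hzero_def)
  then show ?thesis unfolding hless_def hpos_def by simp
qed

lemma hless_hzero_iff: "hless hzero a \<longleftrightarrow> hpos a"
proof -
  have "hadd a (hneg hzero) = a" by (rule ext) (simp add: hadd_def hneg_def hzero_def)
  then show ?thesis unfolding hless_def by simp
qed

lemma gprod_subgroup:
  fixes A B :: "'a::ab_group_add set"
  assumes "addsubgroup A" "addsubgroup B" shows "addsubgroup (gprod A B)"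
  unfolding addsubgroup_def
proof (intro conjI ballI)
  show "0 \<in> gprod A B" using assms unfolding addsubgroup_def gprod_def by force
next
  fix x y assume "x \<in> gprod A B" "y \<in> gprod A B"
  then obtain a b a' b' where ab: "x = a+b" "y = a'+b'" "a\<in>A" "b\<in>B" "a'\<in>A" "b'\<in>B"
    unfolding gprod_def by blast
  then have "x + y = (a+a') + (b+b')" by (simp add: algebra_simps)
  moreover have "a+a' \<in> A" "b+b' \<in> B" using assms ab unfolding addsubgroup_def by blast+
  ultimately show "x+y \<in> gprod A B" unfolding gprod_def by blast
next
  fix x assume "x \<in> gprod A B"
  then obtain a b where ab: "x = a+b" "a\<in>A" "b\<in>B" unfolding gprod_def by blast
  then have "-x = (-a) + (-b)" by (simp add: algebra_simps)
  moreover have "-a \<in> A" "-b \<in> B" using assms ab unfolding addsubgroup_def by blast+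
  ultimately show "-x \<in> gprod A B" unfolding gprod_def by blast
qed

lemma gprod_left: "0 \<in> B \<Longrightarrow> A \<subseteq> gprod A B"
  unfolding gprod_def by force

lemma gprod_right: "0 \<in> A \<Longrightarrow> B \<subseteq> gprod A B"
  unfolding gprod_def by force

section \<open>The logarithm of the EL value group\<close>

text \<open>Inside this locale, lw restricted to the union EL of the tower is the logarithm Log:
  an order-preserving group embedding whose restriction to Gam (Suc n) is onto
  k((Gam n ^{>1})).\<close>
locale el_tower =
  fixes G :: "'u::linordered_ab_group_add set"
    and l :: "'u \<Rightarrow> 'u \<Rightarrow> 'k::linordered_field"
    and Gam :: "nat \<Rightarrow> 'u set"
    and lw :: "'u \<Rightarrow> 'u \<Rightarrow> 'k"
  assumes tower: "EL_tower G l Gam lw"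
begin

definition EL :: "'u set" where
  "EL = (\<Union>n. Gam n)"

lemma tower_facts:
  "Gam 0 = G" "\<And>n. Gam n \<subseteq> Gam (Suc n)" "\<And>n. addsubgroup (Gam n)"
  "\<And>g. g \<in> G \<Longrightarrow> lw g = l g" "\<And>n. bij_betw lw (Gam (Suc n)) (hahn (pos (Gam n)))"
  "\<And>n x y. x \<in> Gam (Suc n) \<Longrightarrow> y \<in> Gam (Suc n) \<Longrightarrow> lw (x + y) = hadd (lw x) (lw y)"
  "\<And>n x y. x \<in> Gam (Suc n) \<Longrightarrow> y \<in> Gam (Suc n) \<Longrightarrow> x < y \<Longrightarrow> hless (lw x) (lw y)"
  using tower unfolding EL_tower_def by auto

lemma Gam_mono: "i \<le> j \<Longrightarrow> Gam i \<subseteq> Gam j"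
  using lift_Suc_mono_le[of Gam] tower_facts(2) by blast

lemma Gam_EL: "Gam n \<subseteq> EL"
  unfolding EL_def by blast

lemma G_EL: "G \<subseteq> EL"
  using tower_facts(1) Gam_EL by blast

lemma common_level:
  assumes "x \<in> EL" "y \<in> EL" obtains n where "x \<in> Gam (Suc n)" "y \<in> Gam (Suc n)"
proof -
  obtain i j where "x \<in> Gam i" "y \<in> Gam j" using assms unfolding EL_def by auto
  moreover have "Gam i \<subseteq> Gam (Suc (max i j))" "Gam j \<subseteq> Gam (Suc (max i j))"
    by (auto intro!: Gam_mono)
  ultimately show ?thesis using that by blast
qed

lemma EL_subgroup: "addsubgroup EL"
  unfolding addsubgroup_def
proof (intro conjI ballI)
  show "0 \<in> EL" using tower_facts(3)[of 0] Gam_EL unfolding addsubgroup_def by blast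
next
  fix x y assume "x \<in> EL" "y \<in> EL"
  then obtain n where "x \<in> Gam (Suc n)" "y \<in> Gam (Suc n)" by (rule common_level)
  then show "x + y \<in> EL" using tower_facts(3)[of "Suc n"] Gam_EL unfolding addsubgroup_def by blast
next
  fix x assume "x \<in> EL" then show "-x \<in> EL"
    using tower_facts(3) unfolding EL_def addsubgroup_def by blast
qed

lemma EL_zero: "0 \<in> EL" and EL_add: "x \<in> EL \<Longrightarrow> y \<in> EL \<Longrightarrow> x + y \<in> EL"
  and EL_neg: "x \<in> EL \<Longrightarrow> -x \<in> EL"
  using EL_subgroup unfolding addsubgroup_def by blast+

lemma Log_add: "x \<in> EL \<Longrightarrow> y \<in> EL \<Longrightarrow> lw (x + y) = hadd (lw x) (lw y)"
  by (metis common_level tower_facts(6))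

lemma Log_mono: "x \<in> EL \<Longrightarrow> y \<in> EL \<Longrightarrow> x < y \<Longrightarrow> hless (lw x) (lw y)"
  by (metis common_level tower_facts(7))

lemma Log_less_iff: "x \<in> EL \<Longrightarrow> y \<in> EL \<Longrightarrow> hless (lw x) (lw y) \<longleftrightarrow> x < y"
  by (metis hless_asym hless_irrefl Log_mono not_less_iff_gr_or_eq)

lemma Log_inj: "x \<in> EL \<Longrightarrow> y \<in> EL \<Longrightarrow> lw x = lw y \<Longrightarrow> x = y"
  by (metis hless_irrefl Log_mono not_less_iff_gr_or_eq)

lemma Log_zero: "lw 0 = hzero"
proof (rule ext)
  fix g
  have "lw 0 = hadd (lw 0) (lw 0)" using Log_add[OF EL_zero EL_zero] by simp
  then have "lw 0 g = lw 0 g + lw 0 g" unfolding hadd_def by metis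
  then show "lw 0 g = hzero g" unfolding hzero_def by (metis add_cancel_left_right)
qed

lemma Log_neg: assumes "x \<in> EL" shows "lw (-x) = hneg (lw x)"
proof (rule ext)
  fix g
  have "hadd (lw x) (lw (-x)) = hzero" using Log_add[OF assms EL_neg[OF assms]] Log_zero by simp
  then have "lw x g + lw (-x) g = 0" by (metis hadd_def hzero_def)
  then show "lw (-x) g = hneg (lw x) g" unfolding hneg_def by (metis neg_eq_iff_add_eq_0)
qed

lemma Log_pos_iff: "x \<in> EL \<Longrightarrow> hpos (lw x) \<longleftrightarrow> 0 < x"
  using Log_less_iff[OF EL_zero] by (simp add: Log_zero hless_hzero_iff)

lemma Log_hahn: "x \<in> Gam (Suc n) \<Longrightarrow> lw x \<in> hahn (pos (Gam n))"
  by (rule bij_betw_apply[OF tower_facts(5)])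

lemma Log_anti_wo: assumes "x \<in> EL" shows "anti_wo (supp (lw x))"
proof -
  obtain n where "x \<in> Gam n" using assms unfolding EL_def by blast
  then have "x \<in> Gam (Suc n)" using tower_facts(2) by blast
  then show ?thesis using Log_hahn unfolding hahn_def by blast
qed

lemma Log_surj: assumes "f \<in> hahn (pos (Gam n))" obtains x where "x \<in> Gam (Suc n)" "lw x = f"
  using bij_betw_imp_surj_on[OF tower_facts(5)] assms that by (metis imageE)

lemma l_hahn: "g \<in> G \<Longrightarrow> l g \<in> hahn (pos G)"
  using Log_hahn[of g 0] tower_facts(1,2,4) by auto

lemma Exp_set_EL: "Exp_set Gam lw S = {x \<in> EL. lw x \<in> hahn S}"
  by (simp add: Exp_set_def EL_def)

lemma Exp_subgroup: "addsubgroup (Exp_set Gam lw S)"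
  unfolding addsubgroup_def Exp_set_EL
  using EL_zero Log_zero hahn_zero EL_add Log_add hahn_hadd EL_neg Log_neg hahn_hneg by auto

lemma Exp_set_subset: assumes "S \<subseteq> pos (Gam n)" shows "Exp_set Gam lw S \<subseteq> Gam (Suc n)"
proof
  fix x assume "x \<in> Exp_set Gam lw S"
  then have x: "x \<in> EL" "lw x \<in> hahn (pos (Gam n))"
    using hahn_mono[OF assms] unfolding Exp_set_EL by auto
  obtain y where "y \<in> Gam (Suc n)" "lw y = lw x" using x(2) by (rule Log_surj)
  then show "x \<in> Gam (Suc n)" using Log_inj x Gam_EL by (metis subsetD)
qed

lemma Exp_set_onto:
  assumes "S \<subseteq> pos (Gam n)" "f \<in> hahn S"
  obtains x where "x \<in> Exp_set Gam lw S" "lw x = f"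
proof -
  obtain x where "x \<in> Gam (Suc n)" "lw x = f" using Log_surj hahn_mono assms by blast
  then show ?thesis using that Gam_EL assms(2) unfolding Exp_set_EL by blast
qed

text \<open>In particular Exp k((S)) contains Exp of a monomial, a positive element.\<close>
lemma Exp_monomial:
  assumes "s \<in> S" "S \<subseteq> pos (Gam n)"
  obtains x where "x \<in> Exp_set Gam lw S" "0 < x"
proof -
  obtain x where x: "x \<in> Exp_set Gam lw S" "lw x = hmonom s 1"
    using Exp_set_onto[OF assms(2) hmonom_hahn[OF assms(1)]] .
  have "hpos (lw x)" using x(2) hpos_hmonom[of "1::'k"] by simp
  moreover have "x \<in> EL" using x(1) unfolding Exp_set_EL by blast
  ultimately show ?thesis using that x(1) Log_pos_iff by blast
qed

text \<open>Testing it against the monomials of K^{>1} shows that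
  the support of Log g, for g \<in> K, lies strictly below K^{>1}.\<close>
lemma growth_support_below:
  assumes gK: "growth_axiom lw G K" and g: "g \<in> K" and w: "w \<in> supp (lw g)" and s: "s \<in> pos K"
  shows "w < s"
proof (rule ccontr)
  assume "\<not> w < s"
  have KG: "K \<subseteq> G" and Kg: "addsubgroup K"
    and ax: "\<And>h f. h \<in> K \<Longrightarrow> f \<in> hahn (pos K) \<Longrightarrow> f \<noteq> hzero \<Longrightarrow> hless (lw h) (habs f)"
    using gK unfolding growth_axiom_def by auto
  text \<open>A series with positive leading coefficient at some v \<ge> s exceeds a monomial at s.\<close>
  have contra: False if h: "h \<in> K" "0 < lw h v" "\<forall>u\<in>supp (lw h). u \<le> v" "s \<le> v" for h v
  proof -
    define f where "f = hmonom s (lw h v / 2)"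
    have "hpos f" unfolding f_def using h(2) by (simp add: hpos_hmonom)
    then have "f \<noteq> hzero" "habs f = f" unfolding hpos_def habs_def by auto
    moreover have "f \<in> hahn (pos K)" unfolding f_def by (rule hmonom_hahn[OF s])
    ultimately have "hless (lw h) f" using ax[OF h(1)] by metis
    moreover have "hless f (lw h)"
    proof (rule hless_by_leading[of f v])
      show "f v < lw h v" using h(2) by (auto simp: f_def hmonom_def)
      show "f w = 0" if "v < w" for w using that h(4) by (auto simp: f_def hmonom_def)
      show "lw h w = 0" if "v < w" for w using that h(3) unfolding supp_def by force
    qed
    ultimately show False using hless_asym by blast
  qed
  have gEL: "g \<in> EL" using g KG G_EL by blast
  have "lw g \<noteq> hzero" using w unfolding supp_def hzero_def by auto
  define v where "v = hval (lw g)"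
  have v: "v \<in> supp (lw g)" "\<forall>u\<in>supp (lw g). u \<le> v"
    using hval_max[OF Log_anti_wo[OF gEL] \<open>lw g \<noteq> hzero\<close>] v_def by auto
  have "s \<le> v" using \<open>\<not> w < s\<close> v w by (meson not_less order_trans)
  show False
  proof (cases "0 < lw g v")
    case True then show False using contra[OF g True v(2) \<open>s \<le> v\<close>] by simp
  next
    case False
    then have "0 < lw (-g) v" using v(1) Log_neg[OF gEL] by (auto simp: supp_def hneg_def)
    moreover have "-g \<in> K" using g Kg unfolding addsubgroup_def by blast
    moreover have "\<forall>u\<in>supp (lw (-g)). u \<le> v" using v(2) Log_neg[OF gEL] supp_hneg by metis
    ultimately show False using contra \<open>s \<le> v\<close> by blast
  qed
qed

end

section \<open>The LE tower over a base group satisfying the growth axiom\<close>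

text \<open>LE_tower Gam lw K (Suc n) is the group G^n of the LE construction started from the
  base G^0 = K, and LE_tower Gam lw K 0 = {0} plays the role of G^{-1}.\<close>
fun LE_tower :: "(nat \<Rightarrow> 'u::linordered_ab_group_add set) \<Rightarrow> ('u \<Rightarrow> 'u \<Rightarrow> 'k::zero)
    \<Rightarrow> 'u set \<Rightarrow> nat \<Rightarrow> 'u set" where
  "LE_tower Gam lw K 0 = {0}"
| "LE_tower Gam lw K (Suc 0) = K"
| "LE_tower Gam lw K (Suc (Suc n)) =
     gprod (LE_tower Gam lw K (Suc n))
           (Exp_set Gam lw (above (LE_tower Gam lw K (Suc n)) (LE_tower Gam lw K n)))"

lemma LEg_eq_LE_tower: "LEg Gam lw psi H m n = LE_tower Gam lw ((psi ^^ m) ` H) n"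
  by (induction Gam lw psi H m n rule: LEg.induct) simp_all

locale le_tower = el_tower +
  fixes K
  assumes base_growth: "growth_axiom lw G K"
begin

text \<open>level n is G^n, gap n is the set (G^n)^{>G^{n-1}} and expgap n is Exp k((gap n)),
  so that level (Suc n) = level n \<cdot> expgap n.\<close>
abbreviation level where
  "level n \<equiv> LE_tower Gam lw K (Suc n)"

abbreviation gap where
  "gap n \<equiv> above (level n) (LE_tower Gam lw K n)"

abbreviation expgap where
  "expgap n \<equiv> Exp_set Gam lw (gap n)"

lemma level_Suc: "level (Suc n) = gprod (level n) (expgap n)"
  by simp

lemma base_subgroup: "addsubgroup K" "K \<subseteq> G"
  using base_growth unfolding growth_axiom_def by auto

lemma zero_expgap: "0 \<in> expgap n"
  using Exp_subgroup unfolding addsubgroup_def by blast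

lemma zero_level: "0 \<in> level n"
proof (induction n)
  case 0 then show ?case using base_subgroup unfolding addsubgroup_def by simp
next
  case (Suc n) then show ?case using zero_expgap gprod_left[of "expgap n" "level n"] by auto
qed

lemma gap_pos: "gap n \<subseteq> pos (level n)"
proof -
  have "0 \<in> LE_tower Gam lw K n" using zero_level by (cases n) auto
  then show ?thesis unfolding pos_def above_def by auto
qed

lemma level_subgroup: "addsubgroup (level n) \<and> level n \<subseteq> Gam n"
proof (induction n)
  case 0 then show ?case using base_subgroup tower_facts(1) by simp
next
  case (Suc n)
  have "gap n \<subseteq> pos (Gam n)" using gap_pos Suc unfolding pos_def above_def by blast
  then have "expgap n \<subseteq> Gam (Suc n)" by (rule Exp_set_subset)
  moreover have "level n \<subseteq> Gam (Suc n)" using Suc tower_facts(2) by blast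
  ultimately have "level (Suc n) \<subseteq> Gam (Suc n)"
    using tower_facts(3)[of "Suc n"] unfolding level_Suc gprod_def addsubgroup_def by blast
  then show ?case using Suc gprod_subgroup Exp_subgroup level_Suc by metis
qed

lemma level_pos_Gam: "pos (level n) \<subseteq> pos (Gam n)"
  using level_subgroup unfolding pos_def above_def by blast

lemma level_EL: "level n \<subseteq> EL" and expgap_EL: "expgap n \<subseteq> EL"
  using level_subgroup Gam_EL by (blast, auto simp: Exp_set_EL)

lemma level_add: "x \<in> level n \<Longrightarrow> y \<in> level n \<Longrightarrow> x + y \<in> level n"
  and level_neg: "x \<in> level n \<Longrightarrow> -x \<in> level n"
  using level_subgroup unfolding addsubgroup_def by blast+

lemma expgap_neg: "x \<in> expgap n \<Longrightarrow> -x \<in> expgap n"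
  using Exp_subgroup unfolding addsubgroup_def by blast

definition below_gap :: "nat \<Rightarrow> bool" where
  "below_gap n \<longleftrightarrow> (\<forall>g\<in>level n. \<forall>w\<in>supp (lw g). \<forall>s\<in>gap n. w < s)"

text \<open>Under the invariant, every positive element of expgap n dominates level n: the
  leading monomial of Log e lies in the gap, where Log g vanishes.\<close>
lemma expgap_dominates:
  assumes below: "below_gap n" and e: "e \<in> expgap n" "0 < e" and g: "g \<in> level n"
  shows "g < e"
proof -
  have eEL: "e \<in> EL" and le: "lw e \<in> hahn (gap n)" using e unfolding Exp_set_EL by auto
  have gEL: "g \<in> EL" using g level_EL by blast
  have hp: "hpos (lw e)" using Log_pos_iff[OF eEL] e(2) by simp
  then have nz: "lw e \<noteq> hzero" unfolding hpos_def by simp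
  define v where "v = hval (lw e)"
  have v: "v \<in> supp (lw e)" "\<forall>u\<in>supp (lw e). u \<le> v"
    using hval_max[OF Log_anti_wo[OF eEL] nz] v_def by auto
  have "v \<in> gap n" using v le unfolding hahn_def by blast
  then have small: "\<And>w. w \<in> supp (lw g) \<Longrightarrow> w < v" using below g unfolding below_gap_def by blast
  have "hless (lw g) (lw e)"
  proof (rule hless_by_leading[of "lw g" v])
    show "lw g v < lw e v" using hp small[of v] unfolding hpos_def v_def supp_def by auto
    show "lw g w = 0" if "v < w" for w using small[of w] that unfolding supp_def by force
    show "lw e w = 0" if "v < w" for w using v(2) that unfolding supp_def by force
  qed
  then show ?thesis using Log_less_iff gEL eEL by blast
qed

lemma expgap_dominates_neg:
  assumes "below_gap n" "e \<in> expgap n" "e < 0" "g \<in> level n"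
  shows "e < g"
  using expgap_dominates[OF assms(1) expgap_neg[OF assms(2)] _ level_neg[OF assms(4)]] assms(3)
  by simp

text \<open>For the base level the invariant is the growth axiom, via
  growth_support_below; the gap is nonempty because K is a nontrivial group.\<close>
lemma below_gap_0: "below_gap 0" and gap_0_nonempty: "gap 0 \<noteq> {}"
proof -
  show "below_gap 0"
    using growth_support_below[OF base_growth] unfolding below_gap_def pos_def by simp
  obtain k where k: "k \<in> K" "k \<noteq> 0"
    using base_growth zero_level[of 0] unfolding growth_axiom_def by auto
  have "-k \<in> K" using k(1) base_subgroup(1) unfolding addsubgroup_def by blast
  then have "k \<in> gap 0 \<or> -k \<in> gap 0" using k by (auto simp: above_def neg_less_0_iff_less)
  then show "gap 0 \<noteq> {}" by blast
qed

text \<open>The invariant propagates: Log of an element of level (Suc n) is Log of an element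
  of level n, supported below gap n, plus a series supported in gap n \<subseteq> level n; both
  lie below gap (Suc n).\<close>
lemma below_gap_Suc:
  assumes below: "below_gap n" and ne: "gap n \<noteq> {}"
  shows "below_gap (Suc n)"
  unfolding below_gap_def
proof (intro ballI)
  fix g w s assume g: "g \<in> level (Suc n)" and w: "w \<in> supp (lw g)" and s: "s \<in> gap (Suc n)"
  obtain a e where ae: "g = a + e" "a \<in> level n" "e \<in> expgap n"
    using g unfolding level_Suc gprod_def by blast
  have "lw g = hadd (lw a) (lw e)" using Log_add ae level_EL expgap_EL by blast
  then have "w \<in> supp (lw a) \<or> w \<in> supp (lw e)" using supp_hadd[of "lw a" "lw e"] w by auto
  moreover obtain s' where s': "s' \<in> gap n" using ne by blast
  moreover have "\<And>x. x \<in> level n \<Longrightarrow> x < s" using s unfolding above_def by simp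
  moreover have "supp (lw e) \<subseteq> level n"
    using ae(3) unfolding Exp_set_EL hahn_def above_def by blast
  moreover have "\<And>u. u \<in> supp (lw a) \<Longrightarrow> u < s'"
    using below ae(2) s' unfolding below_gap_def by blast
  ultimately show "w < s" using s' unfolding above_def by (blast intro: order.strict_trans)
qed

text \<open>The gap stays nonempty: the exponential of a monomial at a point of gap n is a
  positive element of expgap n, hence dominates level n.\<close>
lemma gap_Suc_nonempty:
  assumes below: "below_gap n" and ne: "gap n \<noteq> {}"
  shows "gap (Suc n) \<noteq> {}"
proof -
  obtain s where s: "s \<in> gap n" using ne by blast
  have "gap n \<subseteq> pos (Gam n)" using gap_pos level_pos_Gam by blast
  then obtain x where x: "x \<in> expgap n" "0 < x" using Exp_monomial s by metis
  have "\<forall>a\<in>level n. a < x" using expgap_dominates[OF below x] by blast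
  moreover have "x \<in> level (Suc n)" using x(1) gprod_right[OF zero_level] level_Suc by blast
  ultimately have "x \<in> gap (Suc n)" by (simp add: above_def)
  then show ?thesis by blast
qed

lemma below_gap_nonempty: "below_gap n \<and> gap n \<noteq> {}"
  by (induction n) (use below_gap_0 gap_0_nonempty below_gap_Suc gap_Suc_nonempty in blast)+

text \<open>level n is convex in level (Suc n): an element a + e with e \<noteq> 0 in expgap n
  lies above or below all of level n.\<close>
lemma level_convex:
  assumes "x \<in> level n" "y \<in> level n" "z \<in> level (Suc n)" "x \<le> z" "z \<le> y"
  shows "z \<in> level n"
proof -
  have below: "below_gap n" using below_gap_nonempty by blast
  obtain a e where ae: "z = a + e" "a \<in> level n" "e \<in> expgap n"
    using assms(3) unfolding level_Suc gprod_def by blast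
  consider "e = 0" | "0 < e" | "e < 0" by fastforce
  then show ?thesis
  proof cases
    case 1 then show ?thesis using ae by simp
  next
    case 2
    have "y - a < e" using expgap_dominates[OF below ae(3) 2] level_add[OF assms(2) level_neg[OF ae(2)]]
      by simp
    then show ?thesis using ae(1) assms(5) by (simp add: algebra_simps)
  next
    case 3
    have "e < x - a" using expgap_dominates_neg[OF below ae(3) 3] level_add[OF assms(1) level_neg[OF ae(2)]]
      by simp
    then show ?thesis using ae(1) assms(4) by (simp add: algebra_simps)
  qed
qed

text \<open>The product level n \<cdot> expgap n is direct: a nonzero element of expgap n is
  strictly above or below itself if it lies in level n.\<close>
lemma level_inter_expgap: "level n \<inter> expgap n = {0}"
proof -
  have below: "below_gap n" using below_gap_nonempty by blast
  have "x = 0" if "x \<in> level n" "x \<in> expgap n" for x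
    using expgap_dominates[OF below that(2) _ that(1)]
      expgap_dominates_neg[OF below that(2) _ that(1)] by fastforce
  then show ?thesis using zero_level zero_expgap by blast
qed

theorem antilex_level: "antilex_prod (level n) (expgap n) (level (Suc n))"
  unfolding antilex_prod_def
  using level_subgroup Exp_subgroup level_Suc level_inter_expgap level_convex by blast

text \<open>A positive element of level (Suc n) outside gap (Suc n) lies below some element of
  level n, hence in level n by convexity.\<close>
lemma pos_outside_gap:
  assumes "t \<in> pos (level (Suc n))" "t \<notin> gap (Suc n)"
  shows "t \<in> pos (level n)"
proof -
  obtain g where "g \<in> level n" "t \<le> g" using assms unfolding pos_def above_def by auto
  then show ?thesis using level_convex[OF zero_level] assms unfolding pos_def above_def by auto
qed

text \<open>Exp k((level n ^{>1})) \<subseteq> level (Suc n), by induction on n: split Log x at the gap;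
  the part in the gap is Log of an element of expgap, the rest is supported in
  pos (level n) and handled by the induction hypothesis.\<close>
theorem Exp_pos_level: "Exp_set Gam lw (pos (level n)) \<subseteq> level (Suc n)"
proof (induction n)
  case 0
  show ?case using gprod_right[of K] zero_level[of 0] by (simp add: pos_def)
next
  case (Suc n)
  show ?case
  proof
    fix x assume "x \<in> Exp_set Gam lw (pos (level (Suc n)))"
    then have xEL: "x \<in> EL" and f: "lw x \<in> hahn (pos (level (Suc n)))"
      unfolding Exp_set_EL by auto
    define f1 where "f1 = (\<lambda>w. if w \<in> gap (Suc n) then lw x w else 0)"
    define f2 where "f2 = (\<lambda>w. if w \<in> gap (Suc n) then 0 else lw x w)"
    have parts: "lw x = hadd f1 f2" "f1 \<in> hahn (pos (level (Suc n)) \<inter> gap (Suc n))"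
      "f2 \<in> hahn (pos (level (Suc n)) - gap (Suc n))"
      using hahn_split[OF f, of "gap (Suc n)"] unfolding f1_def f2_def by blast+
    have "pos (level (Suc n)) - gap (Suc n) \<subseteq> pos (level n)" using pos_outside_gap by blast
    then have f12: "f1 \<in> hahn (gap (Suc n))" "f2 \<in> hahn (pos (level n))"
      using parts(2,3) hahn_mono[of _ "gap (Suc n)"] hahn_mono[of _ "pos (level n)"] by blast+
    have "gap (Suc n) \<subseteq> pos (Gam (Suc n))" using gap_pos level_pos_Gam by blast
    then obtain x1 where x1: "x1 \<in> expgap (Suc n)" "lw x1 = f1"
      using Exp_set_onto f12(1) by metis
    obtain x2 where x2: "x2 \<in> Exp_set Gam lw (pos (level n))" "lw x2 = f2"
      using Exp_set_onto[OF level_pos_Gam f12(2)] .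
    have EL12: "x1 \<in> EL" "x2 \<in> EL" using x1(1) x2(1) unfolding Exp_set_EL by blast+
    have "x2 + x1 \<in> level (Suc (Suc n))"
      using Suc x1(1) x2(1) unfolding level_Suc[of "Suc n"] gprod_def by blast
    moreover have "lw (x2 + x1) = lw x"
      using Log_add[OF EL12(2,1)] x1(2) x2(2) parts(1) by (auto simp: hadd_def)
    ultimately show "x \<in> level (Suc (Suc n))" using Log_inj[OF EL_add[OF EL12(2,1)] xEL] by simp
  qed
qed

end

section \<open>Morphisms transport the growth axiom\<close>

locale el_morphism = el_tower +
  fixes psi
  assumes morph: "morphism G l psi"
begin

lemma psi_facts:
  "\<And>g. g \<in> G \<Longrightarrow> psi g \<in> G"
  "\<And>g h. g \<in> G \<Longrightarrow> h \<in> G \<Longrightarrow> psi (g + h) = psi g + psi h"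
  "\<And>g h. g \<in> G \<Longrightarrow> h \<in> G \<Longrightarrow> g < h \<Longrightarrow> psi g < psi h"
  "\<And>g. g \<in> G \<Longrightarrow> l (psi g) = hmap psi G (l g)"
  using morph unfolding morphism_def by auto

lemma G_subgroup: "addsubgroup G"
  using tower_facts(1) tower_facts(3)[of 0] by simp

lemma psi_zero: "psi 0 = 0"
  using psi_facts(2)[of 0 0] G_subgroup unfolding addsubgroup_def by simp

lemma psi_less_iff: "g \<in> G \<Longrightarrow> h \<in> G \<Longrightarrow> psi g < psi h \<longleftrightarrow> g < h"
  by (metis psi_facts(3) not_less_iff_gr_or_eq order_less_asym)

lemma psi_le_iff: "g \<in> G \<Longrightarrow> h \<in> G \<Longrightarrow> psi g \<le> psi h \<longleftrightarrow> g \<le> h"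
  by (meson not_le psi_less_iff)

lemma psi_inj: "inj_on psi G"
  unfolding inj_on_def by (metis psi_facts(3) not_less_iff_gr_or_eq order_less_irrefl)

lemma hmap_at: "g \<in> G \<Longrightarrow> hmap psi G a (psi g) = a g"
  unfolding hmap_def using psi_inj by (simp add: inv_into_f_f)

lemma hmap_out: "y \<notin> psi ` G \<Longrightarrow> hmap psi G a y = 0"
  unfolding hmap_def by simp

lemma hmap_hadd: "hmap psi G (hadd a b) = hadd (hmap psi G a) (hmap psi G b)"
  by (rule ext) (simp add: hmap_def hadd_def)

lemma hmap_hneg: "hmap psi G (hneg a) = hneg (hmap psi G a)"
  by (rule ext) (simp add: hmap_def hneg_def)

text \<open>Since psi preserves the order, it maps the leading monomial of a series supported
  in G to the leading monomial of the image; so it preserves positivity.\<close>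
lemma hmap_hpos:
  assumes "supp a \<subseteq> G" "anti_wo (supp a)" "hpos a"
  shows "hpos (hmap psi G a)"
proof -
  have "a \<noteq> hzero" using assms(3) unfolding hpos_def by simp
  define v where "v = hval a"
  have v: "v \<in> supp a" "\<forall>w\<in>supp a. w \<le> v" using hval_max[OF assms(2) \<open>a \<noteq> hzero\<close>] v_def by auto
  have vG: "v \<in> G" using v assms(1) by blast
  have av: "0 < a v" using assms(3) unfolding hpos_def v_def by simp
  have vanish: "\<forall>w. psi v < w \<longrightarrow> hmap psi G a w = 0"
  proof (intro allI impI)
    fix w assume "psi v < w"
    show "hmap psi G a w = 0"
    proof (cases "w \<in> psi ` G")
      case True
      then obtain g where g: "g \<in> G" "w = psi g" by blast
      then have "v < g" using \<open>psi v < w\<close> vG psi_less_iff by blast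
      then have "g \<notin> supp a" using v(2) by (meson not_le)
      then show ?thesis using hmap_at[OF g(1), of a] g(2) unfolding supp_def by simp
    qed (rule hmap_out)
  qed
  have "hmap psi G a (psi v) = a v" by (rule hmap_at[OF vG])
  then show ?thesis using hpos_iff_leading[OF _ vanish] av by simp
qed

lemma hmap_hless:
  assumes "supp a \<subseteq> G" "anti_wo (supp a)" "supp b \<subseteq> G" "anti_wo (supp b)" "hless a b"
  shows "hless (hmap psi G a) (hmap psi G b)"
proof -
  have "supp (hadd b (hneg a)) \<subseteq> supp b \<union> supp a"
    using supp_hadd[of b "hneg a"] unfolding supp_hneg .
  moreover have "anti_wo (supp b \<union> supp a)" using anti_wo_Un assms(2,4) by blast
  ultimately have "supp (hadd b (hneg a)) \<subseteq> G" "anti_wo (supp (hadd b (hneg a)))"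
    using assms(1,3) anti_wo_subset by blast+
  then show ?thesis
    using hmap_hpos[of "hadd b (hneg a)"] assms(5) unfolding hless_def hmap_hadd hmap_hneg by simp
qed

lemma hmap_habs:
  assumes "supp a \<subseteq> G" "anti_wo (supp a)" "a \<noteq> hzero"
  shows "hmap psi G (habs a) = habs (hmap psi G a)"
proof (cases "hpos a")
  case True then show ?thesis using hmap_hpos[OF assms(1,2) True] unfolding habs_def by simp
next
  case False
  then have "hpos (hneg a)" using hpos_or_hpos_hneg[OF assms(2,3)] by simp
  then have "hpos (hneg (hmap psi G a))"
    using hmap_hpos[of "hneg a"] assms(1,2) unfolding supp_hneg hmap_hneg by simp
  then have "\<not> hpos (hmap psi G a)" using hpos_not_both by blast
  then show ?thesis using False by (simp add: habs_def hmap_hneg)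
qed

lemma psi_image_subgroup:
  assumes "K \<subseteq> G" "addsubgroup K" shows "addsubgroup (psi ` K)"
  unfolding addsubgroup_def
proof (intro conjI ballI)
  show "0 \<in> psi ` K" using psi_zero assms(2) unfolding addsubgroup_def by force
next
  fix x y assume "x \<in> psi ` K" "y \<in> psi ` K"
  then show "x + y \<in> psi ` K" using psi_facts(2) assms unfolding addsubgroup_def
    by (smt (verit) image_iff subsetD)
next
  fix x assume "x \<in> psi ` K"
  then obtain a where a: "a \<in> K" "x = psi a" by blast
  then have "-a \<in> K" using assms(2) unfolding addsubgroup_def by blast
  moreover have "psi a + psi (-a) = 0"
    using psi_facts(2)[of a "-a"] a assms(1) \<open>-a \<in> K\<close> psi_zero by (simp add: subsetD)
  then have "psi (-a) = - psi a" by (metis neg_eq_iff_add_eq_0)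
  ultimately show "-x \<in> psi ` K" using a by force
qed

text \<open>Every series supported in psi(K)^{>1} is the image of a series supported in
  K^{>1}, namely of its composite with psi.\<close>
lemma hahn_pullback:
  assumes K: "K \<subseteq> G" and f: "f \<in> hahn (pos (psi ` K))"
  obtains f0 where "f0 \<in> hahn (pos K)" "f = hmap psi G f0"
proof
  define f0 where "f0 = (\<lambda>y. if y \<in> G then f (psi y) else 0)"
  have sf: "supp f \<subseteq> pos (psi ` K)" "anti_wo (supp f)" using f unfolding hahn_def by auto
  have s0: "supp f0 \<subseteq> pos K"
  proof
    fix y assume "y \<in> supp f0"
    then have y: "y \<in> G" "psi y \<in> pos (psi ` K)" using sf(1) unfolding f0_def supp_def by (auto split: if_splits)
    then obtain k where "k \<in> K" "psi y = psi k" "psi 0 < psi k"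
      unfolding pos_def above_def psi_zero by auto
    then show "y \<in> pos K"
      using y(1) K psi_inj psi_less_iff[of 0 y] G_subgroup
      unfolding pos_def above_def addsubgroup_def inj_on_def by auto
  qed
  have "anti_wo (supp f0)"
    unfolding anti_wo_def
  proof (intro allI impI)
    fix B assume B: "B \<subseteq> supp f0" "B \<noteq> {}"
    then have BG: "B \<subseteq> G" unfolding f0_def supp_def by auto
    have "psi ` B \<subseteq> supp f" "psi ` B \<noteq> {}"
      using B unfolding f0_def supp_def by (auto split: if_splits)
    then obtain b where "b \<in> B" "\<forall>c\<in>B. psi c \<le> psi b"
      using sf(2) unfolding anti_wo_def by (metis (no_types, lifting) image_iff)
    then show "\<exists>b\<in>B. \<forall>c\<in>B. c \<le> b" using BG psi_le_iff by blast
  qed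
  then show "f0 \<in> hahn (pos K)" using s0 unfolding hahn_def by blast
  have "f y = hmap psi G f0 y" for y
  proof (cases "y \<in> psi ` G")
    case True
    then obtain g where "g \<in> G" "y = psi g" by blast
    then show ?thesis using hmap_at[of g f0] unfolding f0_def by simp
  next
    case False
    then have "y \<notin> supp f" using sf(1) K unfolding pos_def above_def by auto
    then show ?thesis using hmap_out[OF False] unfolding supp_def by simp
  qed
  then show "f = hmap psi G f0" by blast
qed

text \<open>The growth axiom is transported from K to psi(K): psi commutes with Log on G, and
  it preserves the ordering and absolute values of series supported in G.\<close>
lemma growth_image:
  assumes gK: "growth_axiom lw G K" shows "growth_axiom lw G (psi ` K)"
proof -
  have KG: "K \<subseteq> G" and Kg: "addsubgroup K" and K0: "K \<noteq> {0}"
    and ax: "\<And>h f. h \<in> K \<Longrightarrow> f \<in> hahn (pos K) \<Longrightarrow> f \<noteq> hzero \<Longrightarrow> hless (lw h) (habs f)"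
    using gK unfolding growth_axiom_def by auto
  have "psi ` K \<noteq> {0}"
  proof -
    obtain k where k: "k \<in> K" "k \<noteq> 0" using K0 Kg unfolding addsubgroup_def by blast
    have "0 \<in> G" using G_subgroup unfolding addsubgroup_def by blast
    then have "psi k \<noteq> 0" using inj_onD[OF psi_inj, of k 0] k KG psi_zero by auto
    then show ?thesis using k(1) by blast
  qed
  moreover have "hless (lw h) (habs f)"
    if h: "h \<in> psi ` K" and f: "f \<in> hahn (pos (psi ` K))" "f \<noteq> hzero" for h f
  proof -
    obtain k where k: "k \<in> K" "h = psi k" using h by blast
    obtain f0 where f0: "f0 \<in> hahn (pos K)" "f = hmap psi G f0" using hahn_pullback[OF KG f(1)] .
    have "f0 \<noteq> hzero" using f0(2) f(2) by (auto simp: hmap_def hzero_def)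
    have kG: "k \<in> G" using k KG by auto
    have Logs: "lw k = l k" "lw h = hmap psi G (lw k)" using tower_facts(4) kG psi_facts k by auto
    have "pos K \<subseteq> G" "pos G \<subseteq> G" using KG unfolding pos_def above_def by auto
    moreover have "lw k \<in> hahn (pos G)" using l_hahn[OF kG] Logs(1) by simp
    ultimately have supports: "supp (lw k) \<subseteq> G" "anti_wo (supp (lw k))"
      "supp f0 \<subseteq> G" "anti_wo (supp f0)"
      using f0(1) unfolding hahn_def by blast+
    have "supp (habs f0) = supp f0" unfolding habs_def by (simp add: supp_hneg)
    then have "hless (hmap psi G (lw k)) (hmap psi G (habs f0))"
      using hmap_hless[OF supports(1,2)] supports(3,4) ax[OF k(1) f0(1) \<open>f0 \<noteq> hzero\<close>]
      by simp
    then show ?thesis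
      using Logs(2) f0(2) hmap_habs[OF supports(3,4) \<open>f0 \<noteq> hzero\<close>] by simp
  qed
  ultimately show ?thesis
    unfolding growth_axiom_def using KG psi_facts(1) psi_image_subgroup[OF KG Kg] by blast
qed

lemma growth_iterate: "growth_axiom lw G K \<Longrightarrow> growth_axiom lw G ((psi ^^ m) ` K)"
proof (induction m)
  case (Suc m)
  have "(psi ^^ Suc m) ` K = psi ` ((psi ^^ m) ` K)" by (simp add: image_image)
  then show ?case using growth_image Suc by simp
qed simp

end

theorem proposition9:
  fixes klog :: "'k::linordered_field \<Rightarrow> 'k"
    and G :: "'u::linordered_ab_group_add set"
    and l :: "'u \<Rightarrow> 'u \<Rightarrow> 'k"
    and Gam :: "nat \<Rightarrow> 'u set"
    and lw :: "'u \<Rightarrow> 'u \<Rightarrow> 'k"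
    and psi :: "'u \<Rightarrow> 'u"
    and H :: "'u set"
  assumes "surj_log klog"
    and "addsubgroup G"
    and "prelog_section G l"
    and "EL_tower G l Gam lw"
    and "morphism G l psi"
    and "growth_axiom lw G H"
  shows "(\<forall>m. growth_axiom lw G (LEg Gam lw psi H m (Suc 0)))
       \<and> (\<forall>m n. antilex_prod (LEg Gam lw psi H m (Suc n))
                 (Exp_set Gam lw (above (LEg Gam lw psi H m (Suc n)) (LEg Gam lw psi H m n)))
                 (LEg Gam lw psi H m (Suc (Suc n))))
       \<and> (\<forall>m n. Exp_set Gam lw (pos (LEg Gam lw psi H m (Suc n)))
                 \<subseteq> LEg Gam lw psi H m (Suc (Suc n)))"
proof -
  interpret el_morphism G l Gam lw psi
    using assms(4,5) by unfold_locales
  have growth: "growth_axiom lw G ((psi ^^ m) ` H)" for m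
    using growth_iterate[OF assms(6)] .
  have tower: "le_tower G l Gam lw ((psi ^^ m) ` H)" for m
    using assms(4) growth by unfold_locales
  show ?thesis
    unfolding LEg_eq_LE_tower
    using growth le_tower.antilex_level[OF tower] le_tower.Exp_pos_level[OF tower] by simp
qed
end
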